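(* Let $\mathcal A$ be an S-ring over a finite group $G$ and $H$ a normal subgroup of $G$ with $H\in\mathcal H(\mathcal A)$. Let $\mathcal A'$ be the S-ring over $G$ generated by $\mathcal A$ and the cosets of $G$ by $H$, and let $H'=\{x\mapsto xh:\ h\in H\}$. Then $\mathrm{Aut}(\mathcal A)$ normalizes the group $\langle\mathrm{Aut}(\mathcal A'),H'\rangle$.
   Context: An S-ring over a finite group $G$ is a subring $\mathcal A$ of $\mathbb Z[G]$ with $\mathbb Z$-basis $\{\sum_{x\in X}x: X\in\mathcal S(\mathcal A)\}$ for a partition $\mathcal S(\mathcal A)$ of $G$ into nonempty basic sets with $\{1\}\in\mathcal S(\mathcal A)$ and $X\in\mathcal S(\mathcal A)\Rightarrow X^{-1}\in\mathcal S(\mathcal A)$; $\mathcal S^*(\mathcal A)$ is the set of unions of basic sets and $\mathcal H(\mathcal A)$ the set of subgroups of $G$ lying in $\mathcal S^*(\mathcal A)$. The S-ring generated by $\mathcal A$ and sets $Y_j$ is the smallest S-ring $\mathcal A'$ with $\mathcal S^*(\mathcal A)\cup\{Y_j\}\subseteq\mathcal S^*(\mathcal A')$. For $X\subseteq G$ let $R_G(X)=\{(g,xg): g\in G, x\in X\}$. The Cayley scheme of $\mathcal A$ is the partition $\{R_G(X): X\in\mathcal S(\mathcal A)\}$ of $G\times G$; $\mathrm{Aut}(\mathcal A)$ is the group of permutations $f$ of $G$ with $1^f=1$ and $R_G(X)^f=R_G(X)$ for all $X\in\mathcal S(\mathcal A)$. *)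

theory Defs
  imports "HOL-Algebra.Algebra"
begin

text \<open>S-rings over a finite group G, represented by their partition S(A) into basic sets.
The condition that the W-span of the basic-set sums is closed under multiplication is
written out literally: for basic sets U, V, the coefficient of z in the product
(sum U)(sum V), namely the number of pairs (x,y) in U x V with x y = z, is constant
on every basic set W.\<close>

definition inv_set_sr :: "('a, 'b) monoid_scheme \<Rightarrow> 'a set \<Rightarrow> 'a set" where
  "inv_set_sr G U = (\<lambda>x. m_inv G x) ` U"

definition is_sring :: "('a, 'b) monoid_scheme \<Rightarrow> 'a set set \<Rightarrow> bool" where
  "is_sring G S \<longleftrightarrow>
     (\<forall>U\<in>S. U \<noteq> {}) \<and>
     (\<forall>U\<in>S. \<forall>V\<in>S. U \<noteq> V \<longrightarrow> U \<inter> V = {}) \<and>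
     \<Union>S = carrier G \<and>
     {one G} \<in> S \<and>
     (\<forall>U\<in>S. inv_set_sr G U \<in> S) \<and>
     (\<forall>U\<in>S. \<forall>V\<in>S. \<forall>W\<in>S. \<forall>z1\<in>W. \<forall>z2\<in>W.
        card {(x, y). x \<in> U \<and> y \<in> V \<and> monoid.mult G x y = z1}
      = card {(x, y). x \<in> U \<and> y \<in> V \<and> monoid.mult G x y = z2})"

definition sstar :: "'a set set \<Rightarrow> 'a set set" where
  "sstar S = {\<Union>T | T. T \<subseteq> S}"

definition sring_subgroups :: "('a, 'b) monoid_scheme \<Rightarrow> 'a set set \<Rightarrow> 'a set set" where
  "sring_subgroups G S = {H. subgroup H G \<and> H \<in> sstar S}"

definition sring_generated_by ::
  "('a, 'b) monoid_scheme \<Rightarrow> 'a set set \<Rightarrow> 'a set set \<Rightarrow> 'a set set \<Rightarrow> bool" where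
  "sring_generated_by G S Ys S' \<longleftrightarrow>
     is_sring G S' \<and> sstar S \<union> Ys \<subseteq> sstar S' \<and>
     (\<forall>S''. is_sring G S'' \<and> sstar S \<union> Ys \<subseteq> sstar S'' \<longrightarrow> sstar S' \<subseteq> sstar S'')"

definition cayley_rel :: "('a, 'b) monoid_scheme \<Rightarrow> 'a set \<Rightarrow> ('a \<times> 'a) set" where
  "cayley_rel G U = {(g, monoid.mult G x g) | g x. g \<in> carrier G \<and> x \<in> U}"

definition sring_aut :: "('a, 'b) monoid_scheme \<Rightarrow> 'a set set \<Rightarrow> ('a \<Rightarrow> 'a) set" where
  "sring_aut G S = {f \<in> carrier (BijGroup (carrier G)).
     f (one G) = one G \<and>
     (\<forall>U\<in>S. (\<lambda>(a, b). (f a, f b)) ` cayley_rel G U = cayley_rel G U)}"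

definition right_transl :: "('a, 'b) monoid_scheme \<Rightarrow> 'a set \<Rightarrow> ('a \<Rightarrow> 'a) set" where
  "right_transl G H = {(\<lambda>x\<in>carrier G. monoid.mult G x h) | h. h \<in> H}"

end

theory Submission
  imports Defs
begin

(* Write Aut(T) for the permutations f of G with f(b) f(a)^-1 \<in> U \<longleftrightarrow> b a^-1 \<in> U for all U \<in> T,
   i.e. the automorphisms of the Cayley scheme of T, and Aut(T)_1 for the stabiliser of 1.
   Aut(T) contains every right translation, so for p \<in> Aut(T)_1 and g \<in> G the map
   x \<mapsto> p(x g) p(g)^-1 lies in Aut(T)_1 again.  This is all Schur's argument needs: the
   orbits of Aut(T)_1 are the basic sets of an S-ring, each member of T is a union of them, and
   Aut(T)_1 preserves their Cayley relations.  Consequently the S-ring A' generated by A and the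
   cosets of H has automorphism group Aut(A \<union> G/H)_1, which is the stabiliser of 1 in the
   group Q of automorphisms of A fixing every coset Hx.  Q is generated by this stabiliser and
   the right translations by H, and it is normalised by Aut(A): as H is a union of basic sets,
   automorphisms of A preserve the relation of lying in the same coset of H. *)

lemma BijGroup_closed:
  "s \<in> carrier (BijGroup E) \<Longrightarrow> x \<in> E \<Longrightarrow> s x \<in> E"
  by (auto simp: BijGroup_def Bij_def bij_betw_def)

lemma BijGroup_mult_apply:
  "s \<in> carrier (BijGroup E) \<Longrightarrow> t \<in> carrier (BijGroup E) \<Longrightarrow> x \<in> E \<Longrightarrow>
    (s \<otimes>\<^bsub>BijGroup E\<^esub> t) x = s (t x)"
  by (simp add: BijGroup_def compose_def)

lemma BijGroup_one_apply: "x \<in> E \<Longrightarrow> \<one>\<^bsub>BijGroup E\<^esub> x = x"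
  by (simp add: BijGroup_def)

lemma BijGroup_inv_apply:
  assumes "s \<in> carrier (BijGroup E)" "x \<in> E"
  shows "(inv\<^bsub>BijGroup E\<^esub> s) (s x) = x" "s ((inv\<^bsub>BijGroup E\<^esub> s) x) = x"
proof -
  have s: "s \<in> Bij E" "bij_betw s E E"
    using assms(1) by (simp_all add: BijGroup_def Bij_def)
  have "s x \<in> E"
    using s(2) assms(2) by (rule bij_betw_apply)
  then show "(inv\<^bsub>BijGroup E\<^esub> s) (s x) = x"
    using s assms(2) by (simp add: inv_BijGroup bij_betw_inv_into_left)
  show "s ((inv\<^bsub>BijGroup E\<^esub> s) x) = x"
    using s assms(2) by (simp add: inv_BijGroup bij_betw_inv_into_right)
qed

lemma BijGroup_eqI:
  "s \<in> carrier (BijGroup E) \<Longrightarrow> t \<in> extensional E \<Longrightarrow> (\<And>x. x \<in> E \<Longrightarrow> s x = t x) \<Longrightarrow> s = t"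
  by (auto simp: BijGroup_def Bij_def intro: extensionalityI)

lemma group_action_BijGroup_subgroup:
  assumes "subgroup K (BijGroup E)"
  shows "group_action ((BijGroup E)\<lparr>carrier := K\<rparr>) E (\<lambda>p. p)"
proof -
  have "group_action (BijGroup E) E (\<lambda>p. p)"
    by (simp add: group_action_def group_hom_def group_hom_axioms_def group_BijGroup hom_def)
  then show ?thesis
    using assms by (rule group_action.induced_action)
qed

lemma bij_betw_image_eq_iff:
  assumes bij: "bij_betw h A A" and R: "R \<subseteq> A"
  shows "h ` R = R \<longleftrightarrow> (\<forall>x\<in>A. h x \<in> R \<longleftrightarrow> x \<in> R)"
proof
  assume "h ` R = R"
  then show "\<forall>x\<in>A. h x \<in> R \<longleftrightarrow> x \<in> R"
    using bij R inj_on_image_mem_iff[of h A] by (metis bij_betw_def)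
next
  assume pres: "\<forall>x\<in>A. h x \<in> R \<longleftrightarrow> x \<in> R"
  have "R \<subseteq> h ` R"
  proof
    fix y assume "y \<in> R"
    then obtain x where "x \<in> A" "y = h x"
      using bij R by (auto simp: bij_betw_def)
    then show "y \<in> h ` R"
      using pres \<open>y \<in> R\<close> by blast
  qed
  then show "h ` R = R"
    using pres R by blast
qed

lemma (in group) conj_image_eqI:
  assumes "N \<subseteq> carrier G" "g \<in> carrier G"
    and "\<And>n. n \<in> N \<Longrightarrow> g \<otimes> n \<otimes> inv g \<in> N" "\<And>n. n \<in> N \<Longrightarrow> inv g \<otimes> n \<otimes> g \<in> N"
  shows "(\<lambda>n. g \<otimes> n \<otimes> inv g) ` N = N"
proof
  show "(\<lambda>n. g \<otimes> n \<otimes> inv g) ` N \<subseteq> N"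
    using assms(3) by blast
  show "N \<subseteq> (\<lambda>n. g \<otimes> n \<otimes> inv g) ` N"
  proof
    fix n assume n: "n \<in> N"
    then have "n \<in> carrier G"
      using assms(1) by blast
    then have "n = g \<otimes> (inv g \<otimes> n \<otimes> g) \<otimes> inv g"
      using assms(2) by (simp add: m_assoc) (simp add: m_assoc[symmetric])
    then show "n \<in> (\<lambda>n. g \<otimes> n \<otimes> inv g) ` N"
      using assms(4)[OF n] by blast
  qed
qed

lemma subset_sstar: "S \<subseteq> sstar S"
  unfolding sstar_def by (intro subsetI CollectI exI[where x = "{_}"]) auto

lemma sstar_subset_sstar:
  assumes "S \<subseteq> sstar T"
  shows "sstar S \<subseteq> sstar T"
proof
  fix U assume "U \<in> sstar S"
  then obtain V where V: "V \<subseteq> S" "U = \<Union>V"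
    by (auto simp: sstar_def)
  have "U = \<Union>{Z \<in> T. Z \<subseteq> U}"
  proof
    show "U \<subseteq> \<Union>{Z \<in> T. Z \<subseteq> U}"
    proof
      fix x assume "x \<in> U"
      then obtain W where "W \<in> V" "x \<in> W"
        using V by blast
      moreover obtain Y where "Y \<subseteq> T" "W = \<Union>Y"
        using \<open>W \<in> V\<close> V assms by (auto simp: sstar_def)
      ultimately show "x \<in> \<Union>{Z \<in> T. Z \<subseteq> U}"
        using V by blast
    qed
  qed blast
  then show "U \<in> sstar T"
    unfolding sstar_def by blast
qed

section \<open>Automorphisms of Cayley schemes\<close>

definition right_mult :: "('a, 'b) monoid_scheme \<Rightarrow> 'a \<Rightarrow> 'a \<Rightarrow> 'a" where
  "right_mult G g = (\<lambda>x\<in>carrier G. x \<otimes>\<^bsub>G\<^esub> g)"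

text \<open>Since \<open>(a, b) \<in> cayley_rel G U\<close> iff \<open>b a\<inverse> \<in> U\<close>, this is the automorphism group of the
  Cayley scheme of \<open>T\<close>; unlike \<^const>\<open>sring_aut\<close> it does not require \<open>1\<close> to be fixed.\<close>

definition cayley_aut :: "('a, 'b) monoid_scheme \<Rightarrow> 'a set set \<Rightarrow> ('a \<Rightarrow> 'a) set" where
  "cayley_aut G T = {f \<in> carrier (BijGroup (carrier G)). \<forall>U\<in>T. \<forall>a\<in>carrier G. \<forall>b\<in>carrier G.
     f b \<otimes>\<^bsub>G\<^esub> inv\<^bsub>G\<^esub> (f a) \<in> U \<longleftrightarrow> b \<otimes>\<^bsub>G\<^esub> inv\<^bsub>G\<^esub> a \<in> U}"

definition cayley_stab :: "('a, 'b) monoid_scheme \<Rightarrow> 'a set set \<Rightarrow> ('a \<Rightarrow> 'a) set" where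
  "cayley_stab G T = {f \<in> cayley_aut G T. f \<one>\<^bsub>G\<^esub> = \<one>\<^bsub>G\<^esub>}"

context group
begin

abbreviation Sym :: "('a \<Rightarrow> 'a) monoid" where
  "Sym \<equiv> BijGroup (carrier G)"

lemma right_mult_apply [simp]: "x \<in> carrier G \<Longrightarrow> right_mult G g x = x \<otimes> g"
  by (simp add: right_mult_def)

lemma right_mult_closed:
  assumes "g \<in> carrier G"
  shows "right_mult G g \<in> carrier Sym"
proof -
  have "bij_betw (right_mult G g) (carrier G) (carrier G)"
  proof (rule bij_betwI')
    fix x y assume "x \<in> carrier G" "y \<in> carrier G"
    then show "(right_mult G g x = right_mult G g y) = (x = y)"
      using assms by simp
  next
    fix x assume "x \<in> carrier G"
    then show "right_mult G g x \<in> carrier G"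
      using assms by simp
  next
    fix y assume "y \<in> carrier G"
    then have "y = right_mult G g (y \<otimes> inv g)" "y \<otimes> inv g \<in> carrier G"
      using assms by (simp_all add: m_assoc)
    then show "\<exists>x\<in>carrier G. y = right_mult G g x"
      by blast
  qed
  then show ?thesis
    by (simp add: BijGroup_def Bij_def right_mult_def)
qed

lemma right_mult_inv:
  assumes "h \<in> carrier G"
  shows "right_mult G h \<otimes>\<^bsub>Sym\<^esub> right_mult G (inv h) = \<one>\<^bsub>Sym\<^esub>"
proof (rule BijGroup_eqI[where E = "carrier G"])
  show "right_mult G h \<otimes>\<^bsub>Sym\<^esub> right_mult G (inv h) \<in> carrier Sym"
    using assms right_mult_closed by (simp add: group.is_monoid[OF group_BijGroup] monoid.m_closed)
  show "\<one>\<^bsub>Sym\<^esub> \<in> extensional (carrier G)"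
    by (simp add: BijGroup_def)
  fix x assume "x \<in> carrier G"
  then show "(right_mult G h \<otimes>\<^bsub>Sym\<^esub> right_mult G (inv h)) x = \<one>\<^bsub>Sym\<^esub> x"
    using assms by (simp add: BijGroup_mult_apply right_mult_closed BijGroup_one_apply m_assoc)
qed

lemma cayley_aut_closed: "f \<in> cayley_aut G T \<Longrightarrow> x \<in> carrier G \<Longrightarrow> f x \<in> carrier G"
  by (simp add: cayley_aut_def BijGroup_closed)

lemma subgroup_cayley_aut: "subgroup (cayley_aut G T) Sym"
proof (rule subgroup.intro)
  show "cayley_aut G T \<subseteq> carrier Sym"
    by (auto simp: cayley_aut_def)
  show "\<one>\<^bsub>Sym\<^esub> \<in> cayley_aut G T"
    by (simp add: cayley_aut_def BijGroup_one_apply group.is_monoid group_BijGroup)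
next
  fix f g assume "f \<in> cayley_aut G T" "g \<in> cayley_aut G T"
  then show "f \<otimes>\<^bsub>Sym\<^esub> g \<in> cayley_aut G T"
    by (simp add: cayley_aut_def BijGroup_mult_apply BijGroup_closed
        monoid.m_closed[OF group.is_monoid[OF group_BijGroup]])
next
  fix f assume f: "f \<in> cayley_aut G T"
  have fS: "f \<in> carrier Sym"
    using f by (simp add: cayley_aut_def)
  have "(inv\<^bsub>Sym\<^esub> f) b \<otimes> inv ((inv\<^bsub>Sym\<^esub> f) a) \<in> U \<longleftrightarrow> b \<otimes> inv a \<in> U"
    if U: "U \<in> T" and a: "a \<in> carrier G" and b: "b \<in> carrier G" for U a b
  proof -
    have "(inv\<^bsub>Sym\<^esub> f) a \<in> carrier G" "(inv\<^bsub>Sym\<^esub> f) b \<in> carrier G"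
      using a b fS by (simp_all add: BijGroup_closed group.inv_closed[OF group_BijGroup])
    then have "f ((inv\<^bsub>Sym\<^esub> f) b) \<otimes> inv (f ((inv\<^bsub>Sym\<^esub> f) a)) \<in> U
        \<longleftrightarrow> (inv\<^bsub>Sym\<^esub> f) b \<otimes> inv ((inv\<^bsub>Sym\<^esub> f) a) \<in> U"
      using f U by (simp add: cayley_aut_def)
    then show ?thesis
      using a b fS by (simp add: BijGroup_inv_apply)
  qed
  then show "inv\<^bsub>Sym\<^esub> f \<in> cayley_aut G T"
    using fS by (simp add: cayley_aut_def group.inv_closed[OF group_BijGroup])
qed

lemma right_mult_in_cayley_aut:
  assumes "g \<in> carrier G"
  shows "right_mult G g \<in> cayley_aut G T"
proof -
  have "(b \<otimes> g) \<otimes> inv (a \<otimes> g) = b \<otimes> inv a" if "a \<in> carrier G" "b \<in> carrier G" for a b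
    using that assms by (simp add: inv_mult_group m_assoc[symmetric]) (simp add: m_assoc)
  then show ?thesis
    using right_mult_closed[OF assms] by (simp add: cayley_aut_def)
qed

lemma cayley_aut_translate:
  assumes p: "p \<in> cayley_aut G T" and g: "g \<in> carrier G" and c: "c \<in> carrier G"
  shows "(\<lambda>x\<in>carrier G. p (x \<otimes> g) \<otimes> c) \<in> cayley_aut G T"
proof -
  interpret aut: subgroup "cayley_aut G T" Sym
    by (rule subgroup_cayley_aut)
  let ?q = "right_mult G c \<otimes>\<^bsub>Sym\<^esub> p \<otimes>\<^bsub>Sym\<^esub> right_mult G g"
  have closed: "right_mult G c \<in> cayley_aut G T" "right_mult G c \<otimes>\<^bsub>Sym\<^esub> p \<in> cayley_aut G T"
    "right_mult G g \<in> cayley_aut G T"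
    using p g c by (simp_all add: right_mult_in_cayley_aut)
  then have "?q \<in> cayley_aut G T"
    by simp
  moreover have "?q = (\<lambda>x\<in>carrier G. p (x \<otimes> g) \<otimes> c)"
  proof (rule BijGroup_eqI[where E = "carrier G"])
    show "?q \<in> carrier Sym"
      using calculation aut.subset by blast
    show "(\<lambda>x\<in>carrier G. p (x \<otimes> g) \<otimes> c) \<in> extensional (carrier G)"
      by simp
  next
    fix x assume "x \<in> carrier G"
    with closed p g show "?q x = (\<lambda>x\<in>carrier G. p (x \<otimes> g) \<otimes> c) x"
      using aut.subset by (simp add: BijGroup_mult_apply cayley_aut_closed subset_iff)
  qed
  ultimately show ?thesis
    by simp
qed

lemma cayley_aut_sstar:
  assumes "T' \<subseteq> sstar T"
  shows "cayley_aut G T \<subseteq> cayley_aut G T'"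
proof
  fix f assume f: "f \<in> cayley_aut G T"
  have "f b \<otimes> inv (f a) \<in> U \<longleftrightarrow> b \<otimes> inv a \<in> U"
    if "U \<in> T'" "a \<in> carrier G" "b \<in> carrier G" for U a b
  proof -
    obtain V where "V \<subseteq> T" "U = \<Union>V"
      using assms \<open>U \<in> T'\<close> by (auto simp: sstar_def)
    moreover have "f b \<otimes> inv (f a) \<in> W \<longleftrightarrow> b \<otimes> inv a \<in> W" if "W \<in> T" for W
      using f that \<open>a \<in> carrier G\<close> \<open>b \<in> carrier G\<close> by (simp add: cayley_aut_def)
    ultimately show ?thesis
      by blast
  qed
  then show "f \<in> cayley_aut G T'"
    using f by (simp add: cayley_aut_def)
qed

lemma mem_cayley_rel:
  assumes "U \<subseteq> carrier G"
  shows "(a, b) \<in> cayley_rel G U \<longleftrightarrow> a \<in> carrier G \<and> b \<in> carrier G \<and> b \<otimes> inv a \<in> U"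
proof
  assume "(a, b) \<in> cayley_rel G U"
  then obtain x where "a \<in> carrier G" "x \<in> U" "b = x \<otimes> a"
    by (auto simp: cayley_rel_def)
  then show "a \<in> carrier G \<and> b \<in> carrier G \<and> b \<otimes> inv a \<in> U"
    using assms by (auto simp: m_assoc)
next
  assume ab: "a \<in> carrier G \<and> b \<in> carrier G \<and> b \<otimes> inv a \<in> U"
  then have "b = (b \<otimes> inv a) \<otimes> a"
    by (simp add: m_assoc)
  then show "(a, b) \<in> cayley_rel G U"
    using ab by (auto simp: cayley_rel_def)
qed

lemma sring_aut_eq_cayley_stab:
  assumes "\<And>U. U \<in> T \<Longrightarrow> U \<subseteq> carrier G"
  shows "sring_aut G T = cayley_stab G T"
proof -
  have image_eq_iff: "(\<lambda>(a, b). (f a, f b)) ` cayley_rel G U = cayley_rel G U \<longleftrightarrow>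
      (\<forall>a\<in>carrier G. \<forall>b\<in>carrier G. f b \<otimes> inv (f a) \<in> U \<longleftrightarrow> b \<otimes> inv a \<in> U)"
    if f: "f \<in> carrier Sym" and U: "U \<in> T" for f U
  proof -
    have "bij_betw f (carrier G) (carrier G)"
      using f by (simp add: BijGroup_def Bij_def)
    then have "bij_betw (map_prod f f) (carrier G \<times> carrier G) (carrier G \<times> carrier G)"
      using bij_betw_map_prod by blast
    moreover have "cayley_rel G U \<subseteq> carrier G \<times> carrier G"
      using mem_cayley_rel[OF assms[OF U]] by auto
    ultimately show ?thesis
      using f by (simp add: map_prod_def[symmetric] bij_betw_image_eq_iff mem_cayley_rel[OF assms[OF U]]
          BijGroup_closed)
  qed
  have "f \<in> sring_aut G T \<longleftrightarrow> f \<in> cayley_stab G T" for f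
    by (cases "f \<in> carrier Sym") (auto simp: sring_aut_def cayley_stab_def cayley_aut_def image_eq_iff)
  then show ?thesis
    by blast
qed

lemma subgroup_cayley_stab: "subgroup (cayley_stab G T) Sym"
proof -
  interpret aut: subgroup "cayley_aut G T" Sym
    by (rule subgroup_cayley_aut)
  show ?thesis
  proof (rule subgroup.intro)
    show "cayley_stab G T \<subseteq> carrier Sym"
      using aut.subset by (auto simp: cayley_stab_def)
    show "\<one>\<^bsub>Sym\<^esub> \<in> cayley_stab G T"
      by (simp add: cayley_stab_def BijGroup_one_apply)
  next
    fix f g assume "f \<in> cayley_stab G T" "g \<in> cayley_stab G T"
    then show "f \<otimes>\<^bsub>Sym\<^esub> g \<in> cayley_stab G T"
      using aut.subset by (auto simp: cayley_stab_def BijGroup_mult_apply)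
  next
    fix f assume "f \<in> cayley_stab G T"
    then show "inv\<^bsub>Sym\<^esub> f \<in> cayley_stab G T"
      using aut.subset BijGroup_inv_apply(1)[of f "carrier G" \<one>]
      by (auto simp: cayley_stab_def)
  qed
qed

lemma cayley_stab_closed: "p \<in> cayley_stab G T \<Longrightarrow> x \<in> carrier G \<Longrightarrow> p x \<in> carrier G"
  unfolding cayley_stab_def by (blast intro: cayley_aut_closed)

lemma cayley_stab_mem_iff:
  assumes "U \<in> sstar T" "p \<in> cayley_stab G T" "x \<in> carrier G"
  shows "p x \<in> U \<longleftrightarrow> x \<in> U"
proof -
  have "p \<in> cayley_aut G {U}"
    using assms(1,2) cayley_aut_sstar[of "{U}" T] by (auto simp: cayley_stab_def)
  then have "p x \<otimes> inv (p \<one>) \<in> U \<longleftrightarrow> x \<otimes> inv \<one> \<in> U"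
    using assms(3) by (simp add: cayley_aut_def)
  moreover have "p \<in> cayley_aut G T" "p \<one> = \<one>"
    using assms(2) by (simp_all add: cayley_stab_def)
  ultimately show ?thesis
    using assms(3) by (simp add: cayley_aut_closed)
qed

lemma cayley_stab_translate:
  assumes "p \<in> cayley_stab G T" "g \<in> carrier G"
  shows "(\<lambda>x\<in>carrier G. p (x \<otimes> g) \<otimes> inv (p g)) \<in> cayley_stab G T"
proof -
  have "p \<in> cayley_aut G T"
    using assms by (simp add: cayley_stab_def)
  then have "p g \<in> carrier G"
    using assms by (simp add: cayley_aut_closed)
  then show ?thesis
    using assms cayley_aut_translate[of p T g "inv (p g)"] by (simp add: cayley_stab_def)
qed

end

section \<open>Schur's S-ring of stabiliser orbits\<close>

definition cayley_orbit :: "('a, 'b) monoid_scheme \<Rightarrow> 'a set set \<Rightarrow> 'a \<Rightarrow> 'a set" where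
  "cayley_orbit G T x = (\<lambda>p. p x) ` cayley_stab G T"

definition cayley_orbits :: "('a, 'b) monoid_scheme \<Rightarrow> 'a set set \<Rightarrow> 'a set set" where
  "cayley_orbits G T = cayley_orbit G T ` carrier G"

context group
begin

lemma group_action_cayley_stab:
  "group_action (Sym\<lparr>carrier := cayley_stab G T\<rparr>) (carrier G) (\<lambda>p. p)"
  by (rule group_action_BijGroup_subgroup[OF subgroup_cayley_stab])

lemma cayley_orbit_eq_orbit:
  "cayley_orbit G T x = orbit (Sym\<lparr>carrier := cayley_stab G T\<rparr>) (\<lambda>p. p) x"
  by (auto simp: cayley_orbit_def orbit_def)

lemma cayley_orbits_eq_orbits:
  "cayley_orbits G T = orbits (Sym\<lparr>carrier := cayley_stab G T\<rparr>) (carrier G) (\<lambda>p. p)"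
  by (auto simp: cayley_orbits_def cayley_orbit_eq_orbit orbits_def)

lemma cayley_orbit_subset: "cayley_orbit G T x \<subseteq> carrier G" if "x \<in> carrier G"
  using that by (auto simp: cayley_orbit_def cayley_stab_closed)

lemma cayley_orbit_self: "x \<in> carrier G \<Longrightarrow> x \<in> cayley_orbit G T x"
  using group_action.orbit_refl[OF group_action_cayley_stab] by (simp add: cayley_orbit_eq_orbit)

lemma cayley_orbit_one: "cayley_orbit G T \<one> = {\<one>}"
  using cayley_orbit_self[of \<one> T] by (auto simp: cayley_orbit_def cayley_stab_def)

lemma cayley_orbits_transitive:
  assumes "W \<in> cayley_orbits G T" "z1 \<in> W" "z2 \<in> W"
  obtains p where "p \<in> cayley_stab G T" "z2 = p z1"
proof -
  interpret stab: group_action "Sym\<lparr>carrier := cayley_stab G T\<rparr>" "carrier G" "\<lambda>p. p"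
    by (rule group_action_cayley_stab)
  obtain w where w: "w \<in> carrier G" "W = cayley_orbit G T w"
    using assms(1) by (auto simp: cayley_orbits_def)
  then have "z1 \<in> carrier G" "z2 \<in> carrier G"
    using assms(2,3) cayley_orbit_subset by blast+
  moreover have "w \<in> cayley_orbit G T z1"
    using w assms(2) \<open>z1 \<in> carrier G\<close> stab.orbit_sym[of w z1] by (simp add: cayley_orbit_eq_orbit)
  ultimately have "z2 \<in> cayley_orbit G T z1"
    using w assms(3) stab.orbit_trans[of z1 w z2] by (simp add: cayley_orbit_eq_orbit)
  then show ?thesis
    using that by (auto simp: cayley_orbit_def)
qed

lemma cayley_orbits_mem_iff:
  assumes "U \<in> cayley_orbits G T" "p \<in> cayley_stab G T" "x \<in> carrier G"
  shows "p x \<in> U \<longleftrightarrow> x \<in> U"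
proof -
  interpret stab: subgroup "cayley_stab G T" Sym
    by (rule subgroup_cayley_stab)
  obtain u where u: "u \<in> carrier G" and U: "U = cayley_orbit G T u"
    using assms(1) by (auto simp: cayley_orbits_def)
  have "p \<in> carrier Sym" "inv\<^bsub>Sym\<^esub> p \<in> cayley_stab G T"
    using assms(2) stab.subset stab.m_inv_closed by auto
  show ?thesis
  proof
    assume "p x \<in> U"
    then obtain q where q: "q \<in> cayley_stab G T" "p x = q u"
      using U by (auto simp: cayley_orbit_def)
    have "x = (inv\<^bsub>Sym\<^esub> p) (p x)"
      using \<open>p \<in> carrier Sym\<close> assms(3) by (simp add: BijGroup_inv_apply)
    also have "\<dots> = (inv\<^bsub>Sym\<^esub> p \<otimes>\<^bsub>Sym\<^esub> q) u"
      using q \<open>inv\<^bsub>Sym\<^esub> p \<in> cayley_stab G T\<close> u stab.subset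
      by (auto simp: BijGroup_mult_apply)
    finally show "x \<in> U"
      using U q(1) \<open>inv\<^bsub>Sym\<^esub> p \<in> cayley_stab G T\<close> by (auto simp: cayley_orbit_def)
  next
    assume "x \<in> U"
    then obtain q where q: "q \<in> cayley_stab G T" "x = q u"
      using U by (auto simp: cayley_orbit_def)
    then have "p x = (p \<otimes>\<^bsub>Sym\<^esub> q) u"
      using assms(2) u stab.subset by (auto simp: BijGroup_mult_apply)
    then show "p x \<in> U"
      using U q(1) assms(2) by (auto simp: cayley_orbit_def)
  qed
qed

lemma cayley_orbits_translate_mem_iff:
  assumes "U \<in> cayley_orbits G T" "p \<in> cayley_stab G T" "x \<in> carrier G" "y \<in> carrier G"
  shows "p (x \<otimes> y) \<otimes> inv (p y) \<in> U \<longleftrightarrow> x \<in> U"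
  using cayley_orbits_mem_iff[OF assms(1) cayley_stab_translate[OF assms(2,4)] assms(3)] assms(3,4)
  by simp

lemma inv_in_cayley_orbit:
  assumes p: "p \<in> cayley_stab G T" and x: "x \<in> carrier G"
  shows "inv (p x) \<in> cayley_orbit G T (inv x)"
proof -
  let ?q = "\<lambda>y\<in>carrier G. p (y \<otimes> x) \<otimes> inv (p x)"
  have "p x \<in> carrier G" "p \<one> = \<one>"
    using cayley_stab_closed[OF p x] p by (simp_all add: cayley_stab_def)
  then have "?q (inv x) = inv (p x)"
    using x by simp
  then show ?thesis
    using cayley_stab_translate[OF p x] unfolding cayley_orbit_def by (metis image_eqI)
qed

lemma inv_cayley_orbit:
  assumes x: "x \<in> carrier G"
  shows "inv_set_sr G (cayley_orbit G T x) = cayley_orbit G T (inv x)"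
proof
  show "inv_set_sr G (cayley_orbit G T x) \<subseteq> cayley_orbit G T (inv x)"
    using x inv_in_cayley_orbit by (auto simp: inv_set_sr_def cayley_orbit_def[of G T x])
  show "cayley_orbit G T (inv x) \<subseteq> inv_set_sr G (cayley_orbit G T x)"
  proof
    fix y assume "y \<in> cayley_orbit G T (inv x)"
    then obtain p where p: "p \<in> cayley_stab G T" "y = p (inv x)"
      by (auto simp: cayley_orbit_def)
    then have "inv y \<in> cayley_orbit G T x" "y = inv (inv y)"
      using x inv_in_cayley_orbit[OF p(1), of "inv x"] by (simp_all add: cayley_stab_closed)
    then show "y \<in> inv_set_sr G (cayley_orbit G T x)"
      unfolding inv_set_sr_def by (metis image_eqI)
  qed
qed

lemma card_mult_fibre_le:
  assumes fin: "finite (carrier G)"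
    and U: "U \<in> cayley_orbits G T" and V: "V \<in> cayley_orbits G T"
    and p: "p \<in> cayley_stab G T" and z: "z \<in> carrier G"
  shows "card {(x, y). x \<in> U \<and> y \<in> V \<and> x \<otimes> y = z}
    \<le> card {(x, y). x \<in> U \<and> y \<in> V \<and> x \<otimes> y = p z}"
proof (rule card_inj_on_le)
  have UV: "U \<subseteq> carrier G" "V \<subseteq> carrier G"
    using U V cayley_orbit_subset by (auto simp: cayley_orbits_def)
  have pS: "p \<in> carrier Sym"
    using p by (simp add: cayley_stab_def cayley_aut_def)
  let ?phi = "\<lambda>(x, y). (p z \<otimes> inv (p y), p y)"
  show "inj_on ?phi {(x, y). x \<in> U \<and> y \<in> V \<and> x \<otimes> y = z}"
  proof (rule inj_onI)
    fix u v
    assume u: "u \<in> {(x, y). x \<in> U \<and> y \<in> V \<and> x \<otimes> y = z}"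
      and v: "v \<in> {(x, y). x \<in> U \<and> y \<in> V \<and> x \<otimes> y = z}" and "?phi u = ?phi v"
    obtain x1 y1 x2 y2 where uv: "u = (x1, y1)" "v = (x2, y2)"
      by fastforce
    have 1: "x1 \<in> U" "y1 \<in> V" "x1 \<otimes> y1 = z" and 2: "x2 \<in> U" "y2 \<in> V" "x2 \<otimes> y2 = z"
      using u v uv by auto
    have c: "x1 \<in> carrier G" "y1 \<in> carrier G" "x2 \<in> carrier G" "y2 \<in> carrier G"
      using 1 2 UV by auto
    have "(inv\<^bsub>Sym\<^esub> p) (p y1) = (inv\<^bsub>Sym\<^esub> p) (p y2)"
      using \<open>?phi u = ?phi v\<close> uv by simp
    then have "y1 = y2"
      using pS c by (simp add: BijGroup_inv_apply)
    moreover have "x1 = z \<otimes> inv y1" "x2 = z \<otimes> inv y2"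
      using 1 2 c z by (simp_all add: inv_solve_right)
    ultimately show "u = v"
      using uv by simp
  qed
  show "?phi ` {(x, y). x \<in> U \<and> y \<in> V \<and> x \<otimes> y = z}
      \<subseteq> {(x, y). x \<in> U \<and> y \<in> V \<and> x \<otimes> y = p z}"
  proof
    fix w assume "w \<in> ?phi ` {(x, y). x \<in> U \<and> y \<in> V \<and> x \<otimes> y = z}"
    then obtain x y where xy: "x \<in> U" "y \<in> V" "x \<otimes> y = z" and w: "w = ?phi (x, y)"
      by auto
    then have c: "x \<in> carrier G" "y \<in> carrier G" "p y \<in> carrier G"
      using UV p by (auto simp: cayley_stab_closed)
    have "p z \<otimes> inv (p y) \<in> U"
      using cayley_orbits_translate_mem_iff[OF U p c(1,2)] xy by simp
    moreover have "p y \<in> V"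
      using cayley_orbits_mem_iff[OF V p c(2)] xy(2) by simp
    moreover have "p z \<otimes> inv (p y) \<otimes> p y = p z"
      using c z p by (simp add: m_assoc cayley_stab_closed)
    ultimately show "w \<in> {(x, y). x \<in> U \<and> y \<in> V \<and> x \<otimes> y = p z}"
      using w by simp
  qed
  show "finite {(x, y). x \<in> U \<and> y \<in> V \<and> x \<otimes> y = p z}"
    using fin UV by (auto intro: finite_subset[of _ "carrier G \<times> carrier G"])
qed

lemma is_sring_cayley_orbits:
  assumes fin: "finite (carrier G)"
  shows "is_sring G (cayley_orbits G T)"
  unfolding is_sring_def
proof (intro conjI)
  interpret stab: group_action "Sym\<lparr>carrier := cayley_stab G T\<rparr>" "carrier G" "\<lambda>p. p"
    by (rule group_action_cayley_stab)
  show "\<forall>U\<in>cayley_orbits G T. U \<noteq> {}"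
    using cayley_orbit_self by (auto simp: cayley_orbits_def)
  show "\<forall>U\<in>cayley_orbits G T. \<forall>V\<in>cayley_orbits G T. U \<noteq> V \<longrightarrow> U \<inter> V = {}"
    using stab.disjoint_union by (auto simp: cayley_orbits_eq_orbits)
  show "\<Union>(cayley_orbits G T) = carrier G"
    using stab.orbits_coverture by (simp add: cayley_orbits_eq_orbits)
  show "{\<one>} \<in> cayley_orbits G T"
    using cayley_orbit_one unfolding cayley_orbits_def by (metis one_closed image_eqI)
  show "\<forall>U\<in>cayley_orbits G T. inv_set_sr G U \<in> cayley_orbits G T"
    using inv_cayley_orbit by (auto simp: cayley_orbits_def)
  show "\<forall>U\<in>cayley_orbits G T. \<forall>V\<in>cayley_orbits G T. \<forall>W\<in>cayley_orbits G T. \<forall>z1\<in>W. \<forall>z2\<in>W.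
      card {(x, y). x \<in> U \<and> y \<in> V \<and> x \<otimes> y = z1}
    = card {(x, y). x \<in> U \<and> y \<in> V \<and> x \<otimes> y = z2}"
  proof (intro ballI antisym)
    fix U V W z1 z2
    assume U: "U \<in> cayley_orbits G T" and V: "V \<in> cayley_orbits G T"
      and W: "W \<in> cayley_orbits G T" and z: "z1 \<in> W" "z2 \<in> W"
    have "W \<subseteq> carrier G"
      using W cayley_orbit_subset by (auto simp: cayley_orbits_def)
    then have zc: "z1 \<in> carrier G" "z2 \<in> carrier G"
      using z by auto
    obtain p where "p \<in> cayley_stab G T" "z2 = p z1"
      using cayley_orbits_transitive[OF W z] .
    then show "card {(x, y). x \<in> U \<and> y \<in> V \<and> x \<otimes> y = z1}
      \<le> card {(x, y). x \<in> U \<and> y \<in> V \<and> x \<otimes> y = z2}"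
      using card_mult_fibre_le[OF fin U V _ zc(1)] by simp
    obtain p' where "p' \<in> cayley_stab G T" "z1 = p' z2"
      using cayley_orbits_transitive[OF W z(2,1)] .
    then show "card {(x, y). x \<in> U \<and> y \<in> V \<and> x \<otimes> y = z2}
      \<le> card {(x, y). x \<in> U \<and> y \<in> V \<and> x \<otimes> y = z1}"
      using card_mult_fibre_le[OF fin U V _ zc(2)] by simp
  qed
qed

lemma cayley_stab_subset_cayley_aut_orbits: "cayley_stab G T \<subseteq> cayley_aut G (cayley_orbits G T)"
proof
  fix r assume r: "r \<in> cayley_stab G T"
  have "r b \<otimes> inv (r a) \<in> U \<longleftrightarrow> b \<otimes> inv a \<in> U"
    if U: "U \<in> cayley_orbits G T" and a: "a \<in> carrier G" and b: "b \<in> carrier G" for U a b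
  proof -
    have "b \<otimes> inv a \<otimes> a = b"
      using a b by (simp add: m_assoc)
    then show ?thesis
      using cayley_orbits_translate_mem_iff[OF U r _ a, of "b \<otimes> inv a"] a b by simp
  qed
  then show "r \<in> cayley_aut G (cayley_orbits G T)"
    using r by (simp add: cayley_stab_def cayley_aut_def)
qed

lemma subset_sstar_cayley_orbits:
  assumes "\<And>U. U \<in> T \<Longrightarrow> U \<subseteq> carrier G"
  shows "T \<subseteq> sstar (cayley_orbits G T)"
proof
  fix U assume U: "U \<in> T"
  have "U \<subseteq> \<Union>(cayley_orbit G T ` U)"
    using assms[OF U] cayley_orbit_self by blast
  moreover have "p x \<in> U" if "p \<in> cayley_stab G T" "x \<in> U" for p x
    using cayley_stab_mem_iff[of U T p x] U subset_sstar assms[OF U] that by blast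
  then have "\<Union>(cayley_orbit G T ` U) \<subseteq> U"
    by (auto simp: cayley_orbit_def)
  moreover have "cayley_orbit G T ` U \<subseteq> cayley_orbits G T"
    using assms[OF U] by (auto simp: cayley_orbits_def)
  ultimately show "U \<in> sstar (cayley_orbits G T)"
    unfolding sstar_def by blast
qed

lemma sring_aut_generated:
  assumes fin: "finite (carrier G)" and gen: "sring_generated_by G S Ys S'"
  shows "sring_aut G S' = sring_aut G (S \<union> Ys)"
proof -
  have S': "is_sring G S'" and incl: "sstar S \<union> Ys \<subseteq> sstar S'"
    and least: "\<And>S''. is_sring G S'' \<Longrightarrow> sstar S \<union> Ys \<subseteq> sstar S'' \<Longrightarrow> sstar S' \<subseteq> sstar S''"
    using gen by (auto simp: sring_generated_by_def)
  have "\<Union>S' = carrier G"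
    using S' by (simp add: is_sring_def)
  then have S'_carrier: "U \<subseteq> carrier G" if "U \<in> sstar S'" for U
    using that by (auto simp: sstar_def)
  have T_sstar: "S \<union> Ys \<subseteq> sstar S'"
    using incl subset_sstar by blast
  let ?O = "cayley_orbits G (S \<union> Ys)"
  have "S \<union> Ys \<subseteq> sstar ?O"
    using T_sstar S'_carrier by (intro subset_sstar_cayley_orbits) blast
  then have "sstar S \<union> Ys \<subseteq> sstar ?O"
    using sstar_subset_sstar[of S ?O] by blast
  then have "sstar S' \<subseteq> sstar ?O"
    by (rule least[OF is_sring_cayley_orbits[OF fin]])
  then have "S' \<subseteq> sstar ?O"
    using subset_sstar[of S'] by blast
  then have "cayley_aut G ?O \<subseteq> cayley_aut G S'"
    by (rule cayley_aut_sstar)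
  then have "cayley_stab G (S \<union> Ys) \<subseteq> cayley_stab G S'"
    using cayley_stab_subset_cayley_aut_orbits[of "S \<union> Ys"] unfolding cayley_stab_def by blast
  moreover have "cayley_stab G S' \<subseteq> cayley_stab G (S \<union> Ys)"
    using cayley_aut_sstar[OF T_sstar] unfolding cayley_stab_def by blast
  moreover have "sring_aut G S' = cayley_stab G S'"
    using subset_sstar[of S'] S'_carrier by (intro sring_aut_eq_cayley_stab) blast
  moreover have "sring_aut G (S \<union> Ys) = cayley_stab G (S \<union> Ys)"
    using T_sstar S'_carrier by (intro sring_aut_eq_cayley_stab) blast
  ultimately show ?thesis
    by blast
qed

end

section \<open>Automorphisms fixing the cosets of a normal subgroup\<close>

definition coset_fixing_aut :: "('a, 'b) monoid_scheme \<Rightarrow> 'a set set \<Rightarrow> 'a set \<Rightarrow> ('a \<Rightarrow> 'a) set" where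
  "coset_fixing_aut G S H = {s \<in> cayley_aut G S. \<forall>x\<in>carrier G. H #>\<^bsub>G\<^esub> s x = H #>\<^bsub>G\<^esub> x}"

context normal
begin

lemma mem_rcos_iff: "x \<in> carrier G \<Longrightarrow> y \<in> carrier G \<Longrightarrow> y \<in> H #> x \<longleftrightarrow> H #> y = H #> x"
  using repr_independence repr_independenceD subgroup_axioms by metis

lemma rcos_eq_iff: "a \<in> carrier G \<Longrightarrow> b \<in> carrier G \<Longrightarrow> b \<otimes> inv a \<in> H \<longleftrightarrow> H #> b = H #> a"
  using rcos_module[OF is_group] mem_rcos_iff by blast

lemma rcos_mult_inv_cong:
  assumes "a \<in> carrier G" "b \<in> carrier G" "a' \<in> carrier G" "b' \<in> carrier G"
    and "H #> a' = H #> a" "H #> b' = H #> b"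
  shows "H #> (b' \<otimes> inv a') = H #> (b \<otimes> inv a)"
proof -
  interpret \<pi>: group_hom G "G Mod H" "\<lambda>x. H #> x"
    by (simp add: group_hom_def group_hom_axioms_def is_group factorgroup_is_group r_coset_hom_Mod)
  show ?thesis
    using assms by simp
qed

lemma subgroup_coset_fixing_aut: "subgroup (coset_fixing_aut G S H) Sym"
proof -
  interpret aut: subgroup "cayley_aut G S" Sym
    by (rule subgroup_cayley_aut)
  show ?thesis
  proof (rule subgroup.intro)
    show "coset_fixing_aut G S H \<subseteq> carrier Sym"
      using aut.subset by (auto simp: coset_fixing_aut_def)
    show "\<one>\<^bsub>Sym\<^esub> \<in> coset_fixing_aut G S H"
      by (simp add: coset_fixing_aut_def BijGroup_one_apply)
  next
    fix s t assume s: "s \<in> coset_fixing_aut G S H" and t: "t \<in> coset_fixing_aut G S H"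
    then have "H #> (s \<otimes>\<^bsub>Sym\<^esub> t) x = H #> x" if "x \<in> carrier G" for x
      using that aut.subset by (auto simp: coset_fixing_aut_def BijGroup_mult_apply cayley_aut_closed)
    then show "s \<otimes>\<^bsub>Sym\<^esub> t \<in> coset_fixing_aut G S H"
      using s t by (simp add: coset_fixing_aut_def)
  next
    fix s assume s: "s \<in> coset_fixing_aut G S H"
    then have sS: "s \<in> carrier Sym"
      using aut.subset by (auto simp: coset_fixing_aut_def)
    have "H #> (inv\<^bsub>Sym\<^esub> s) x = H #> x" if x: "x \<in> carrier G" for x
    proof -
      have "(inv\<^bsub>Sym\<^esub> s) x \<in> carrier G"
        using sS x by (simp add: BijGroup_closed group.inv_closed[OF group_BijGroup])
      then have "H #> s ((inv\<^bsub>Sym\<^esub> s) x) = H #> (inv\<^bsub>Sym\<^esub> s) x"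
        using s by (simp add: coset_fixing_aut_def)
      then show ?thesis
        using sS x by (simp add: BijGroup_inv_apply)
    qed
    then show "inv\<^bsub>Sym\<^esub> s \<in> coset_fixing_aut G S H"
      using s by (simp add: coset_fixing_aut_def)
  qed
qed

lemma right_mult_in_coset_fixing_aut:
  assumes "h \<in> H"
  shows "right_mult G h \<in> coset_fixing_aut G S H"
proof -
  have "H #> (x \<otimes> h) = H #> x" if "x \<in> carrier G" for x
  proof -
    have "x \<otimes> h \<otimes> inv x \<in> H"
      using that assms by (rule inv_op_closed2)
    then show ?thesis
      using that assms rcos_eq_iff by simp
  qed
  then show ?thesis
    using assms right_mult_in_cayley_aut by (simp add: coset_fixing_aut_def)
qed

lemma cayley_aut_rcosets_iff:
  assumes f: "f \<in> carrier Sym" and f1: "f \<one> = \<one>"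
  shows "f \<in> cayley_aut G (rcosets H) \<longleftrightarrow> (\<forall>x\<in>carrier G. H #> f x = H #> x)"
proof
  assume aut: "f \<in> cayley_aut G (rcosets H)"
  show "\<forall>x\<in>carrier G. H #> f x = H #> x"
  proof
    fix x assume x: "x \<in> carrier G"
    have fx: "f x \<in> carrier G"
      using f x by (rule BijGroup_closed)
    have "\<forall>M\<in>rcosets H. \<forall>a\<in>carrier G. \<forall>b\<in>carrier G. f b \<otimes> inv (f a) \<in> M \<longleftrightarrow> b \<otimes> inv a \<in> M"
      using aut by (simp add: cayley_aut_def)
    then have "f x \<otimes> inv (f \<one>) \<in> H #> x \<longleftrightarrow> x \<otimes> inv \<one> \<in> H #> x"
      using rcosetsI[OF subset x] x by blast
    then have "f x \<in> H #> x"
      using fx f1 x rcos_self[OF x subgroup_axioms] by simp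
    then show "H #> f x = H #> x"
      using mem_rcos_iff[OF x fx] by simp
  qed
next
  assume fixed: "\<forall>x\<in>carrier G. H #> f x = H #> x"
  have "f b \<otimes> inv (f a) \<in> M \<longleftrightarrow> b \<otimes> inv a \<in> M"
    if M: "M \<in> rcosets H" and a: "a \<in> carrier G" and b: "b \<in> carrier G" for M a b
  proof -
    obtain c where c: "c \<in> carrier G" "M = H #> c"
      using M by (auto simp: RCOSETS_def)
    have fab: "f a \<in> carrier G" "f b \<in> carrier G"
      using f a b by (simp_all add: BijGroup_closed)
    have "H #> (f b \<otimes> inv (f a)) = H #> (b \<otimes> inv a)"
      using fixed a b by (intro rcos_mult_inv_cong[OF a b fab]) simp_all
    moreover have "f b \<otimes> inv (f a) \<in> M \<longleftrightarrow> H #> (f b \<otimes> inv (f a)) = H #> c"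
      using mem_rcos_iff[OF c(1)] fab c(2) by simp
    moreover have "b \<otimes> inv a \<in> M \<longleftrightarrow> H #> (b \<otimes> inv a) = H #> c"
      using mem_rcos_iff[OF c(1)] a b c(2) by simp
    ultimately show ?thesis
      by simp
  qed
  then show "f \<in> cayley_aut G (rcosets H)"
    using f by (simp add: cayley_aut_def)
qed

lemma cayley_stab_Un_rcosets:
  "cayley_stab G (S \<union> rcosets H) = {s \<in> coset_fixing_aut G S H. s \<one> = \<one>}"
proof -
  have "s \<in> cayley_stab G (S \<union> rcosets H) \<longleftrightarrow> s \<in> coset_fixing_aut G S H \<and> s \<one> = \<one>" for s
  proof -
    have "s \<in> cayley_stab G (S \<union> rcosets H)
        \<longleftrightarrow> s \<in> cayley_aut G S \<and> s \<in> cayley_aut G (rcosets H) \<and> s \<one> = \<one>"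
      by (auto simp: cayley_stab_def cayley_aut_def)
    moreover have "s \<in> cayley_aut G S \<Longrightarrow> s \<in> carrier Sym"
      by (simp add: cayley_aut_def)
    ultimately show ?thesis
      using cayley_aut_rcosets_iff[of s] by (auto simp: coset_fixing_aut_def)
  qed
  then show ?thesis
    by blast
qed

lemma coset_fixing_aut_one_mem: "s \<in> coset_fixing_aut G S H \<Longrightarrow> s \<one> \<in> H"
  using rcos_eq_iff[of \<one> "s \<one>"] cayley_aut_closed[of s S \<one>]
  by (simp add: coset_fixing_aut_def)

lemma generate_coset_fixing_aut:
  "generate Sym ({s \<in> coset_fixing_aut G S H. s \<one> = \<one>} \<union> right_transl G H) = coset_fixing_aut G S H"
  (is "generate Sym ?A = ?Q")
proof
  interpret Sym: group Sym
    by (rule group_BijGroup)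
  interpret Q: subgroup ?Q Sym
    by (rule subgroup_coset_fixing_aut)
  have right_transl: "right_transl G H = right_mult G ` H"
    by (auto simp: right_transl_def right_mult_def)
  have "?A \<subseteq> ?Q"
    using right_mult_in_coset_fixing_aut by (auto simp: right_transl)
  then show "generate Sym ?A \<subseteq> ?Q"
    by (rule Sym.generate_subgroup_incl[OF _ subgroup_coset_fixing_aut])
  show "?Q \<subseteq> generate Sym ?A"
  proof
    fix s assume s: "s \<in> ?Q"
    define h where "h = s \<one>"
    have h: "h \<in> H" "h \<in> carrier G"
      using coset_fixing_aut_one_mem[OF s] by (simp_all add: h_def mem_carrier)
    let ?t = "right_mult G (inv h) \<otimes>\<^bsub>Sym\<^esub> s"
    have "?t \<in> ?Q"
      using right_mult_in_coset_fixing_aut[OF m_inv_closed[OF h(1)]] s by simp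
    moreover have "?t \<one> = \<one>"
      using h s Q.subset right_mult_closed[of "inv h"] cayley_aut_closed[of s S \<one>]
      by (auto simp: h_def BijGroup_mult_apply coset_fixing_aut_def)
    ultimately have "?t \<in> generate Sym ?A"
      by (simp add: generate.incl)
    moreover have "right_mult G h \<in> generate Sym ?A"
      using h by (simp add: right_transl generate.incl)
    moreover have "s = right_mult G h \<otimes>\<^bsub>Sym\<^esub> ?t"
      using h s Q.subset right_mult_closed
      by (simp add: Sym.m_assoc[symmetric] right_mult_inv subset_iff)
    ultimately show "s \<in> generate Sym ?A"
      using generate.eng[of "right_mult G h" Sym ?A ?t] by simp
  qed
qed

lemma cayley_aut_rcos_cong:
  assumes "H \<in> sstar S" "f \<in> cayley_aut G S" "a \<in> carrier G" "b \<in> carrier G"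
  shows "H #> f a = H #> f b \<longleftrightarrow> H #> a = H #> b"
proof -
  have "f \<in> cayley_aut G {H}"
    using assms(1,2) cayley_aut_sstar[of "{H}" S] by blast
  then have "f b \<otimes> inv (f a) \<in> H \<longleftrightarrow> b \<otimes> inv a \<in> H"
    using assms(3,4) by (simp add: cayley_aut_def)
  moreover have "f a \<in> carrier G" "f b \<in> carrier G"
    using assms(2-4) by (simp_all add: cayley_aut_closed)
  ultimately show ?thesis
    using assms(3,4) rcos_eq_iff by metis
qed

lemma conj_in_coset_fixing_aut:
  assumes HS: "H \<in> sstar S" and f: "f \<in> cayley_aut G S" and s: "s \<in> coset_fixing_aut G S H"
  shows "f \<otimes>\<^bsub>Sym\<^esub> s \<otimes>\<^bsub>Sym\<^esub> inv\<^bsub>Sym\<^esub> f \<in> coset_fixing_aut G S H"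
proof -
  interpret aut: subgroup "cayley_aut G S" Sym
    by (rule subgroup_cayley_aut)
  have sA: "s \<in> cayley_aut G S"
    using s by (simp add: coset_fixing_aut_def)
  have fS: "f \<in> carrier Sym" and sS: "s \<in> carrier Sym" and fiS: "inv\<^bsub>Sym\<^esub> f \<in> carrier Sym"
    using f sA aut.subset aut.m_inv_closed[OF f] by auto
  have "H #> (f \<otimes>\<^bsub>Sym\<^esub> s \<otimes>\<^bsub>Sym\<^esub> inv\<^bsub>Sym\<^esub> f) x = H #> x" if x: "x \<in> carrier G" for x
  proof -
    define y where "y = (inv\<^bsub>Sym\<^esub> f) x"
    have y: "y \<in> carrier G" "f y = x"
      using fS fiS x by (simp_all add: y_def BijGroup_closed BijGroup_inv_apply)
    have sy: "s y \<in> carrier G"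
      using sS y(1) by (rule BijGroup_closed)
    have "(f \<otimes>\<^bsub>Sym\<^esub> s \<otimes>\<^bsub>Sym\<^esub> inv\<^bsub>Sym\<^esub> f) x = f (s y)"
      using fS sS fiS x f sA
      by (simp add: y_def BijGroup_mult_apply BijGroup_closed)
    moreover have "H #> s y = H #> y"
      using s y(1) by (simp add: coset_fixing_aut_def)
    ultimately show ?thesis
      using cayley_aut_rcos_cong[OF HS f sy y(1)] y(2) by simp
  qed
  then show ?thesis
    using f sA by (simp add: coset_fixing_aut_def)
qed

lemma conj_coset_fixing_aut:
  assumes "H \<in> sstar S" "f \<in> cayley_aut G S"
  shows "(\<lambda>k. f \<otimes>\<^bsub>Sym\<^esub> k \<otimes>\<^bsub>Sym\<^esub> inv\<^bsub>Sym\<^esub> f) ` coset_fixing_aut G S H = coset_fixing_aut G S H"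
proof -
  interpret aut: subgroup "cayley_aut G S" Sym
    by (rule subgroup_cayley_aut)
  interpret Q: subgroup "coset_fixing_aut G S H" Sym
    by (rule subgroup_coset_fixing_aut)
  have "inv\<^bsub>Sym\<^esub> f \<otimes>\<^bsub>Sym\<^esub> k \<otimes>\<^bsub>Sym\<^esub> f \<in> coset_fixing_aut G S H" if "k \<in> coset_fixing_aut G S H" for k
    using conj_in_coset_fixing_aut[OF assms(1) aut.m_inv_closed[OF assms(2)] that] assms(2) aut.subset
    by (auto simp: group.inv_inv[OF group_BijGroup])
  then show ?thesis
    using group.conj_image_eqI[OF group_BijGroup Q.subset] assms conj_in_coset_fixing_aut aut.subset
    by blast
qed

end

theorem theorem7p2:
  fixes G :: "('a, 'b) monoid_scheme" and S S' :: "'a set set" and H :: "'a set"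
  assumes "group G"
    and "finite (carrier G)"
    and "is_sring G S"
    and "H \<lhd> G"
    and "H \<in> sring_subgroups G S"
    and "sring_generated_by G S (rcosets\<^bsub>G\<^esub> H) S'"
  shows "\<forall>f \<in> sring_aut G S.
           (\<lambda>k. f \<otimes>\<^bsub>BijGroup (carrier G)\<^esub> k \<otimes>\<^bsub>BijGroup (carrier G)\<^esub> inv\<^bsub>BijGroup (carrier G)\<^esub> f)
             ` generate (BijGroup (carrier G)) (sring_aut G S' \<union> right_transl G H)
         = generate (BijGroup (carrier G)) (sring_aut G S' \<union> right_transl G H)"
proof -
  interpret normal H G
    by (rule assms(4))
  have S_carrier: "U \<subseteq> carrier G" if "U \<in> S" for U
    using assms(3) that by (auto simp: is_sring_def)
  have HS: "H \<in> sstar S"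
    using assms(5) by (simp add: sring_subgroups_def)
  have "U \<subseteq> carrier G" if "U \<in> S \<union> rcosets\<^bsub>G\<^esub> H" for U
    using that S_carrier rcosets_carrier[OF is_group] by blast
  then have "sring_aut G S' = cayley_stab G (S \<union> rcosets\<^bsub>G\<^esub> H)"
    using sring_aut_generated[OF assms(2,6)] sring_aut_eq_cayley_stab by metis
  also have "\<dots> = {s \<in> coset_fixing_aut G S H. s \<one>\<^bsub>G\<^esub> = \<one>\<^bsub>G\<^esub>}"
    by (rule cayley_stab_Un_rcosets)
  finally have "generate (BijGroup (carrier G)) (sring_aut G S' \<union> right_transl G H) = coset_fixing_aut G S H"
    by (simp add: generate_coset_fixing_aut)
  moreover have "sring_aut G S \<subseteq> cayley_aut G S"
    using S_carrier by (simp add: sring_aut_eq_cayley_stab cayley_stab_def)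
  ultimately show ?thesis
    using conj_coset_fixing_aut[OF HS] by (simp add: subset_iff)
qed

end
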